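(* Let $R \subseteq X \times Y \times Z$ be any relation with $X, Y$ finite. For every $\epsilon>0$ and $\delta>0$, \[ \mathsf{R}\mathsf{Q}_{\epsilon+\delta}^{||}(R) \leq \mathsf{R}\mathsf{Q}_\epsilon^{||,pub}(R) + O\!\left(\log (\log |X| + \log |Y|) + \log \tfrac{1}{\delta}\right). \]
   Context: Hybrid simultaneous message passing (SMP) model for a relation $R \subseteq X\times Y\times Z$: Alice receives $x\in X$, Bob receives $y \in Y$. Alice sends a classical message to a referee and Bob sends a quantum message to the referee (simultaneously, with no interaction); the referee outputs some $z\in Z$. The protocol computes $R$ with error $\gamma$ if for every $(x,y)$ the output $z$ satisfies $(x,y,z)\in R$ with probability at least $1-\gamma$. The cost is the total number of bits plus qubits sent. $\mathsf{R}\mathsf{Q}_\gamma^{||}(R)$ is the minimum cost of such a protocol with error $\gamma$ in which the parties have only private randomness (no shared randomness or entanglement). $\mathsf{R}\mathsf{Q}_\gamma^{||,pub}(R)$ is the same quantity when Alice and the referee additionally share an unlimited amount of public randomness. *)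

theory Defs
  imports "HOL-Probability.Probability" "Jordan_Normal_Form.Schur_Decomposition"
          "HOL-Library.Extended_Nat"
begin

definition mtrace :: "complex mat \<Rightarrow> complex" where
  "mtrace A = (\<Sum>i<dim_row A. A $$ (i,i))"

definition psd :: "nat \<Rightarrow> complex mat \<Rightarrow> bool" where
  "psd d A \<longleftrightarrow> A \<in> carrier_mat d d \<and> mat_adjoint A = A \<and>
     (\<forall>v \<in> carrier_vec d. 0 \<le> Re (conjugate v \<bullet> (A *\<^sub>v v)))"

definition density :: "nat \<Rightarrow> complex mat \<Rightarrow> bool" where
  "density d \<rho> \<longleftrightarrow> psd d \<rho> \<and> mtrace \<rho> = 1"

definition povm_supp :: "nat \<Rightarrow> ('z \<Rightarrow> complex mat) \<Rightarrow> 'z set" where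
  "povm_supp d E = {z. E z \<noteq> 0\<^sub>m d d}"

definition povm :: "nat \<Rightarrow> ('z \<Rightarrow> complex mat) \<Rightarrow> bool" where
  "povm d E \<longleftrightarrow> (\<forall>z. psd d (E z)) \<and> finite (povm_supp d E) \<and>
     (\<forall>i<d. \<forall>j<d. (\<Sum>z\<in>povm_supp d E. E z $$ (i,j)) = (if i = j then 1 else 0))"

definition succ_prob :: "nat \<Rightarrow> ('z \<Rightarrow> complex mat) \<Rightarrow> complex mat \<Rightarrow> ('z \<Rightarrow> bool) \<Rightarrow> real" where
  "succ_prob d E \<rho> P = (\<Sum>z\<in>{z \<in> povm_supp d E. P z}. Re (mtrace (E z * \<rho>)))"

(* Alice: message distribution A x over {0..<2^a} (a classical bits),
   Bob: mixed state \<rho> y on q qubits (dimension 2^q),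
   Referee: for each classical message m a POVM E m with outcomes in Z. *)
definition hybrid_priv_protocol ::
  "nat set \<Rightarrow> nat set \<Rightarrow> (nat \<times> nat \<times> 'z) set \<Rightarrow> real \<Rightarrow> nat \<Rightarrow> nat \<Rightarrow>
   (nat \<Rightarrow> nat pmf) \<Rightarrow> (nat \<Rightarrow> complex mat) \<Rightarrow> (nat \<Rightarrow> 'z \<Rightarrow> complex mat) \<Rightarrow> bool" where
  "hybrid_priv_protocol X Y R \<gamma> a q A \<rho> E \<longleftrightarrow>
     (\<forall>x\<in>X. set_pmf (A x) \<subseteq> {..<2^a}) \<and>
     (\<forall>y\<in>Y. density (2^q) (\<rho> y)) \<and>
     (\<forall>m<2^a. povm (2^q) (E m)) \<and>
     (\<forall>x\<in>X. \<forall>y\<in>Y.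
        measure_pmf.expectation (A x) (\<lambda>m. succ_prob (2^q) (E m) (\<rho> y) (\<lambda>z. (x,y,z) \<in> R))
          \<ge> 1 - \<gamma>)"

definition hybrid_pub_protocol ::
  "nat set \<Rightarrow> nat set \<Rightarrow> (nat \<times> nat \<times> 'z) set \<Rightarrow> real \<Rightarrow> nat \<Rightarrow> nat \<Rightarrow> nat pmf \<Rightarrow>
   (nat \<Rightarrow> nat \<Rightarrow> nat pmf) \<Rightarrow> (nat \<Rightarrow> complex mat) \<Rightarrow> (nat \<Rightarrow> nat \<Rightarrow> 'z \<Rightarrow> complex mat) \<Rightarrow> bool" where
  "hybrid_pub_protocol X Y R \<gamma> a q \<mu> A \<rho> E \<longleftrightarrow>
     (\<forall>r. \<forall>x\<in>X. set_pmf (A r x) \<subseteq> {..<2^a}) \<and>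
     (\<forall>y\<in>Y. density (2^q) (\<rho> y)) \<and>
     (\<forall>r. \<forall>m<2^a. povm (2^q) (E r m)) \<and>
     (\<forall>x\<in>X. \<forall>y\<in>Y.
        measure_pmf.expectation \<mu> (\<lambda>r. measure_pmf.expectation (A r x)
           (\<lambda>m. succ_prob (2^q) (E r m) (\<rho> y) (\<lambda>z. (x,y,z) \<in> R)))
          \<ge> 1 - \<gamma>)"

(* RQ^{||}_gamma(R): minimal cost a + q (\<infinity> if no protocol exists) *)
definition RQ_priv :: "nat set \<Rightarrow> nat set \<Rightarrow> (nat \<times> nat \<times> 'z) set \<Rightarrow> real \<Rightarrow> enat" where
  "RQ_priv X Y R \<gamma> = Inf {enat (a + q) | a q.
      \<exists>A \<rho> E. hybrid_priv_protocol X Y R \<gamma> a q A \<rho> E}"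

definition RQ_pub :: "nat set \<Rightarrow> nat set \<Rightarrow> (nat \<times> nat \<times> 'z) set \<Rightarrow> real \<Rightarrow> enat" where
  "RQ_pub X Y R \<gamma> = Inf {enat (a + q) | a q.
      \<exists>\<mu> A \<rho> E. hybrid_pub_protocol X Y R \<gamma> a q \<mu> A \<rho> E}"

end

theory Submission
  imports Defs
begin

text \<open>Newman's argument. Sample \<open>T = 2^k\<close> public seeds independently: by Hoeffding's inequality
and a union bound over the \<open>|X| |Y|\<close> inputs, once \<open>T \<delta>\<^sup>2\<close> exceeds \<open>log |X| + log |Y|\<close> some
fixed list of seeds achieves average success probability at least \<open>1 - \<epsilon> - \<delta>\<close> on every input.
Alice then draws the index \<open>i < T\<close> privately and sends it along with her message, which costs
\<open>k = O(log log (|X| |Y|) + log (1/\<delta>))\<close> extra bits; the referee measures with the POVM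
belonging to seed \<open>i\<close>. Hoeffding's inequality needs success probabilities in \<open>[0,1]\<close>, i.e.
\<open>tr (E \<rho>) \<ge> 0\<close> for positive semidefinite \<open>E\<close> and \<open>\<rho>\<close>; this follows by splitting rank-one
terms off \<open>\<rho>\<close> one pivot at a time (Schur complements).\<close>

section \<open>Trace of a product of positive semidefinite matrices\<close>

text \<open>Matrices are treated as coefficient functions on \<open>{..<d}\<close>, so that Schur complements
need no carrier bookkeeping.\<close>

definition quad_form :: "nat \<Rightarrow> (nat \<Rightarrow> nat \<Rightarrow> complex) \<Rightarrow> (nat \<Rightarrow> complex) \<Rightarrow> complex" where
  "quad_form d f v = (\<Sum>i<d. \<Sum>j<d. cnj (v i) * f i j * v j)"

definition psd_coeffs :: "nat \<Rightarrow> (nat \<Rightarrow> nat \<Rightarrow> complex) \<Rightarrow> bool" where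
  "psd_coeffs d f \<longleftrightarrow> (\<forall>i<d. \<forall>j<d. f j i = cnj (f i j)) \<and> (\<forall>v. 0 \<le> Re (quad_form d f v))"

definition schur_complement :: "(nat \<Rightarrow> nat \<Rightarrow> complex) \<Rightarrow> nat \<Rightarrow> nat \<Rightarrow> nat \<Rightarrow> complex" where
  "schur_complement f k i j = f i j - f i k * f k j / f k k"

lemma psd_coeffs_of_psd:
  assumes "psd d A" shows "psd_coeffs d (\<lambda>i j. A $$ (i,j))"
proof -
  have A: "A \<in> carrier_mat d d" and adj: "mat_adjoint A = A"
    and pos: "\<And>v. v \<in> carrier_vec d \<Longrightarrow> 0 \<le> Re (conjugate v \<bullet> (A *\<^sub>v v))"
    using assms unfolding psd_def by auto
  have "A $$ (j,i) = cnj (A $$ (i,j))" if "i < d" "j < d" for i j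
  proof -
    have "A $$ (j,i) = mat_adjoint A $$ (j,i)" using adj by simp
    also have "\<dots> = cnj (A $$ (i,j))" using A that unfolding mat_adjoint_def
      by (simp add: mat_of_rows_def)
    finally show ?thesis .
  qed
  moreover have "quad_form d (\<lambda>i j. A $$ (i,j)) v = conjugate (vec d v) \<bullet> (A *\<^sub>v vec d v)" for v
    using A by (simp add: quad_form_def scalar_prod_def mult_mat_vec_def sum_distrib_left
        mult.assoc lessThan_atLeast0)
  then have "0 \<le> Re (quad_form d (\<lambda>i j. A $$ (i,j)) v)" for v
    using pos by simp
  ultimately show ?thesis unfolding psd_coeffs_def by blast
qed

lemma quad_form_supported:
  assumes "S \<subseteq> {..<d}" and "\<And>i. i \<notin> S \<Longrightarrow> v i = 0"
  shows "quad_form d f v = (\<Sum>i\<in>S. \<Sum>j\<in>S. cnj (v i) * f i j * v j)"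
proof -
  have "(\<Sum>j<d. cnj (v i) * f i j * v j) = (\<Sum>j\<in>S. cnj (v i) * f i j * v j)" for i
    by (rule sum.mono_neutral_right) (use assms in auto)
  then have "quad_form d f v = (\<Sum>i<d. \<Sum>j\<in>S. cnj (v i) * f i j * v j)"
    unfolding quad_form_def by simp
  also have "\<dots> = (\<Sum>i\<in>S. \<Sum>j\<in>S. cnj (v i) * f i j * v j)"
    by (rule sum.mono_neutral_right) (use assms in auto)
  finally show ?thesis .
qed

lemma psd_coeffs_diag:
  assumes "psd_coeffs d f" and "k < d"
  shows "0 \<le> Re (f k k)" and "Im (f k k) = 0"
proof -
  have "quad_form d f (\<lambda>i. if i = k then 1 else 0) = f k k"
    using assms(2) by (subst quad_form_supported[of "{k}"]) auto
  then show "0 \<le> Re (f k k)" using assms(1) unfolding psd_coeffs_def by metis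
  have "f k k = cnj (f k k)" using assms unfolding psd_coeffs_def by blast
  then show "Im (f k k) = 0" by (metis cnj.sel(2) neg_equal_zero)
qed

lemma psd_coeffs_zero_diag_row:
  assumes "psd_coeffs d f" and "k < d" "f k k = 0" and "j < d"
  shows "f k j = 0"
proof (rule ccontr)
  assume "f k j \<noteq> 0"
  then have jk: "j \<noteq> k" and pos: "(cmod (f k j))^2 > 0" using assms by auto
  have fjk: "f j k = cnj (f k j)" using assms unfolding psd_coeffs_def by blast
  define t where "t = (Re (f j j) + 1) / (2 * (cmod (f k j))^2)"
  define v where "v = (\<lambda>i. if i = k then - complex_of_real t * f k j else if i = j then 1 else 0)"
  have "quad_form d f v = - complex_of_real t * (2 * (cnj (f k j) * f k j)) + f j j"
    using assms jk by (subst quad_form_supported[of "{k, j}"])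
      (auto simp: v_def fjk algebra_simps)
  then have "Re (quad_form d f v) = - 2 * t * (cmod (f k j))^2 + Re (f j j)"
    by (simp add: complex_norm_square[symmetric] mult.commute)
  also have "\<dots> = -1" using pos by (simp add: t_def field_simps)
  finally show False using assms(1) unfolding psd_coeffs_def by (metis neg_0_le_iff_le not_one_le_zero)
qed

lemma quad_form_schur_complement:
  assumes "\<And>i. i < d \<Longrightarrow> f i k = cnj (f k i)"
  shows "quad_form d (schur_complement f k) v
           = quad_form d f v - cnj (\<Sum>j<d. f k j * v j) * (\<Sum>j<d. f k j * v j) / f k k"
proof -
  have "quad_form d (schur_complement f k) v = (\<Sum>i<d. \<Sum>j<d. cnj (v i) * f i j * v j
                                   - (cnj (v i) * f i k) * (f k j * v j) / f k k)"
    unfolding quad_form_def schur_complement_def by (intro sum.cong refl) (simp add: algebra_simps)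
  also have "\<dots> = quad_form d f v - (\<Sum>i<d. cnj (v i) * f i k) * (\<Sum>j<d. f k j * v j) / f k k"
    unfolding quad_form_def sum_subtractf sum_product sum_divide_distrib by simp
  also have "(\<Sum>i<d. cnj (v i) * f i k) = cnj (\<Sum>j<d. f k j * v j)"
    unfolding cnj_sum by (intro sum.cong refl) (simp add: assms)
  finally show ?thesis .
qed

lemma psd_coeffs_schur_complement:
  assumes psd: "psd_coeffs d f" and k: "k < d" and pivot: "f k k \<noteq> 0"
  shows "psd_coeffs d (schur_complement f k)"
proof -
  let ?g = "schur_complement f k"
  define \<beta> where "\<beta> v = (\<Sum>j<d. f k j * v j)" for v
  have herm: "\<And>i j. i < d \<Longrightarrow> j < d \<Longrightarrow> f j i = cnj (f i j)"
    using psd unfolding psd_coeffs_def by blast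
  have quad: "quad_form d ?g v = quad_form d f v - cnj (\<beta> v) * \<beta> v / f k k" for v
    unfolding \<beta>_def by (rule quad_form_schur_complement[where d = d and f = f and k = k, OF herm[OF k]])
  have zero_row_col: "?g k j = 0" "?g i k = 0" for i j
    using pivot by (simp_all add: schur_complement_def)
  have "0 \<le> Re (quad_form d ?g v)" for v
  proof -
    \<comment> \<open>Shifting the \<open>k\<close>-th coordinate does not change the form of \<open>?g\<close> but makes \<open>\<beta>\<close> vanish.\<close>
    define w where "w = v(k := v k - \<beta> v / f k k)"
    have "\<beta> w = (\<Sum>j<d. f k j * v j + (if j = k then - \<beta> v else 0))"
      unfolding \<beta>_def w_def using pivot by (intro sum.cong refl) (auto simp: algebra_simps)
    then have "\<beta> w = 0"
      using k by (simp add: sum.distrib \<beta>_def)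
    have "quad_form d ?g v = quad_form d ?g w"
      unfolding quad_form_def w_def by (intro sum.cong refl) (auto simp: zero_row_col)
    also have "\<dots> = quad_form d f w" using quad \<open>\<beta> w = 0\<close> by simp
    finally show ?thesis using psd unfolding psd_coeffs_def by simp
  qed
  moreover have "cnj (f k k) = f k k"
    using psd_coeffs_diag(2)[OF psd k] by (simp add: complex_eq_iff)
  then have "?g j i = cnj (?g i j)" if "i < d" "j < d" for i j
    using herm[OF that] herm[OF that(2) k] herm[OF k that(1)]
    by (simp add: schur_complement_def mult.commute)
  ultimately show ?thesis unfolding psd_coeffs_def by blast
qed

lemma trace_pairing_schur_complement:
  assumes "\<And>i. i < d \<Longrightarrow> f k i = cnj (f i k)"
  shows "(\<Sum>i<d. \<Sum>j<d. E i j * f j i)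
           = (\<Sum>i<d. \<Sum>j<d. E i j * schur_complement f k j i) + quad_form d E (\<lambda>i. f i k) / f k k"
proof -
  have "(\<Sum>i<d. \<Sum>j<d. E i j * f j i)
      = (\<Sum>i<d. \<Sum>j<d. E i j * schur_complement f k j i + cnj (f i k) * E i j * f j k / f k k)"
    using assms by (intro sum.cong refl) (simp add: schur_complement_def algebra_simps)
  then show ?thesis
    unfolding quad_form_def sum.distrib sum_divide_distrib by simp
qed

text \<open>Pivoting on the diagonal entries in order; the vanishing of the first \<open>k\<close> rows and columns
is the induction invariant.\<close>

lemma trace_pairing_psd_coeffs_nonneg:
  assumes E: "psd_coeffs d E" and "psd_coeffs d f"
    and "\<forall>i<d. \<forall>j<d. i < k \<or> j < k \<longrightarrow> f i j = 0"
  shows "0 \<le> Re (\<Sum>i<d. \<Sum>j<d. E i j * f j i)"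
  using assms(2,3)
proof (induction "d - k" arbitrary: k f)
  case 0
  then have "(\<Sum>i<d. \<Sum>j<d. E i j * f j i) = 0" by (intro sum.neutral ballI) auto
  then show ?case by simp
next
  case (Suc n)
  then have k: "k < d" by simp
  have IH: "\<And>g. psd_coeffs d g \<Longrightarrow> \<forall>i<d. \<forall>j<d. i < Suc k \<or> j < Suc k \<longrightarrow> g i j = 0
              \<Longrightarrow> 0 \<le> Re (\<Sum>i<d. \<Sum>j<d. E i j * g j i)"
    using Suc.hyps(1)[of "Suc k"] Suc.hyps(2) by simp
  have herm: "\<And>i j. i < d \<Longrightarrow> j < d \<Longrightarrow> f j i = cnj (f i j)"
    using Suc.prems(1) unfolding psd_coeffs_def by blast
  show ?case
  proof (cases "f k k = 0")
    case True
    then have "f k j = 0" "f j k = 0" if "j < d" for j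
      using psd_coeffs_zero_diag_row[OF Suc.prems(1) k True that] herm[OF k that] by simp_all
    then show ?thesis
      using Suc.prems by (intro IH) (auto simp: less_Suc_eq)
  next
    case False
    have "0 \<le> Re (\<Sum>i<d. \<Sum>j<d. E i j * schur_complement f k j i)"
      using Suc.prems False k
      by (intro IH psd_coeffs_schur_complement[OF Suc.prems(1) k])
        (auto simp: schur_complement_def less_Suc_eq)
    moreover have "0 \<le> Re (quad_form d E (\<lambda>i. f i k) / f k k)"
      using E psd_coeffs_diag[OF Suc.prems(1) k] unfolding psd_coeffs_def
      by (simp add: Re_divide)
    ultimately show ?thesis
      using herm[OF _ k] by (simp add: trace_pairing_schur_complement[of d f k E])
  qed
qed

lemma mtrace_mult:
  assumes "E \<in> carrier_mat d d" and "\<rho> \<in> carrier_mat d d"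
  shows "mtrace (E * \<rho>) = (\<Sum>i<d. \<Sum>j<d. E $$ (i,j) * \<rho> $$ (j,i))"
  unfolding mtrace_def using assms by (simp add: scalar_prod_def lessThan_atLeast0)

lemma mtrace_mult_psd_nonneg:
  assumes "psd d E" and "psd d \<rho>"
  shows "0 \<le> Re (mtrace (E * \<rho>))"
proof -
  have "E \<in> carrier_mat d d" "\<rho> \<in> carrier_mat d d" using assms unfolding psd_def by auto
  then have "mtrace (E * \<rho>) = (\<Sum>i<d. \<Sum>j<d. E $$ (i,j) * \<rho> $$ (j,i))" by (rule mtrace_mult)
  also have "0 \<le> Re \<dots>"
    by (rule trace_pairing_psd_coeffs_nonneg[OF psd_coeffs_of_psd[OF assms(1)]
          psd_coeffs_of_psd[OF assms(2)], where k = 0]) simp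
  finally show ?thesis .
qed

lemma succ_prob_nonneg:
  assumes "povm d E" and "density d \<rho>"
  shows "0 \<le> succ_prob d E \<rho> P"
  using assms unfolding succ_prob_def povm_def density_def
  by (auto intro!: sum_nonneg mtrace_mult_psd_nonneg)

lemma succ_prob_le_1:
  assumes "povm d E" and "density d \<rho>"
  shows "succ_prob d E \<rho> P \<le> 1"
proof -
  define S where "S = povm_supp d E"
  have fin: "finite S" and psd_E: "\<And>z. psd d (E z)"
    and sum_E: "\<And>i j. i < d \<Longrightarrow> j < d \<Longrightarrow> (\<Sum>z\<in>S. E z $$ (i,j)) = (if i = j then 1 else 0)"
    using assms(1) unfolding povm_def S_def by auto
  have psd_\<rho>: "psd d \<rho>" and tr: "mtrace \<rho> = 1" using assms(2) unfolding density_def by auto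
  then have \<rho>: "\<rho> \<in> carrier_mat d d" unfolding psd_def by auto
  have nonneg: "0 \<le> Re (mtrace (E z * \<rho>))" for z by (rule mtrace_mult_psd_nonneg[OF psd_E psd_\<rho>])
  have "succ_prob d E \<rho> P \<le> (\<Sum>z\<in>S. Re (mtrace (E z * \<rho>)))"
    unfolding succ_prob_def S_def[symmetric] by (rule sum_mono2) (use fin nonneg in auto)
  also have "\<dots> = Re (\<Sum>z\<in>S. mtrace (E z * \<rho>))" by simp
  also have "(\<Sum>z\<in>S. mtrace (E z * \<rho>)) = (\<Sum>z\<in>S. \<Sum>i<d. \<Sum>j<d. E z $$ (i,j) * \<rho> $$ (j,i))"
    using psd_E \<rho> by (intro sum.cong refl mtrace_mult) (auto simp: psd_def)
  also have "(\<Sum>z\<in>S. \<Sum>i<d. \<Sum>j<d. E z $$ (i,j) * \<rho> $$ (j,i))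
           = (\<Sum>i<d. \<Sum>j<d. (\<Sum>z\<in>S. E z $$ (i,j)) * \<rho> $$ (j,i))"
    by (simp add: sum_distrib_right sum.swap[of _ S])
  also have "\<dots> = (\<Sum>i<d. \<rho> $$ (i,i))"
  proof (intro sum.cong refl)
    fix i assume i: "i \<in> {..<d}"
    then have "(\<Sum>j<d. (\<Sum>z\<in>S. E z $$ (i,j)) * \<rho> $$ (j,i)) = (\<Sum>j<d. if j = i then \<rho> $$ (i,i) else 0)"
      by (intro sum.cong refl) (auto simp: sum_E)
    then show "(\<Sum>j<d. (\<Sum>z\<in>S. E z $$ (i,j)) * \<rho> $$ (j,i)) = \<rho> $$ (i,i)" using i by simp
  qed
  also have "\<dots> = 1" using tr \<rho> by (simp add: mtrace_def lessThan_atLeast0)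
  finally show ?thesis by simp
qed

section \<open>Sampling public seeds\<close>

lemma prob_sample_sum_low_le:
  fixes \<mu> :: "'r pmf" and F :: "'r \<Rightarrow> real"
  assumes T: "T > 0" and \<delta>: "\<delta> > 0"
    and bounded: "\<And>r. 0 \<le> F r \<and> F r \<le> 1"
    and mean: "measure_pmf.expectation \<mu> F \<ge> 1 - \<epsilon>"
  shows "measure_pmf.prob (Pi_pmf {..<T} dflt (\<lambda>_. \<mu>))
           {\<omega>. (\<Sum>i<T. F (\<omega> i)) < real T * (1 - \<epsilon> - \<delta>)} \<le> exp (-2 * real T * \<delta>^2)"
proof -
  define P where "P = Pi_pmf {..<T} dflt (\<lambda>_. \<mu>)"
  have component: "measure_pmf.expectation P (\<lambda>\<omega>. F (\<omega> i)) = measure_pmf.expectation \<mu> F"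
    if "i < T" for i
  proof -
    have "map_pmf (\<lambda>\<omega>. \<omega> i) P = \<mu>" unfolding P_def using that by (subst Pi_pmf_component) auto
    then show ?thesis by (metis integral_map_pmf)
  qed
  define m where "m = (\<Sum>i<T. measure_pmf.expectation P (\<lambda>\<omega>. F (\<omega> i)))"
  interpret Hoeffding_ineq "measure_pmf P" "{..<T}" "\<lambda>i \<omega>. F (\<omega> i)" "\<lambda>_. 0" "\<lambda>_. 1" m
  proof unfold_locales
    show "prob_space.indep_vars (measure_pmf P) (\<lambda>_. borel) (\<lambda>i \<omega>. F (\<omega> i)) {..<T}"
      unfolding P_def
      by (intro prob_space.indep_vars_compose2[OF _ indep_vars_Pi_pmf])
         (auto simp: measure_pmf.prob_space_axioms)
  qed (use bounded in \<open>auto simp: m_def\<close>)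
  have "m \<ge> real T * (1 - \<epsilon>)"
    using component mean T by (simp add: m_def mult_left_mono)
  then have "measure_pmf.prob P {\<omega>. (\<Sum>i<T. F (\<omega> i)) < real T * (1 - \<epsilon> - \<delta>)}
      \<le> measure_pmf.prob P {\<omega> \<in> space (measure_pmf P). (\<Sum>i<T. F (\<omega> i)) \<le> m - real T * \<delta>}"
    by (intro measure_pmf.finite_measure_mono) (auto simp: algebra_simps)
  also have "\<dots> \<le> exp (-2 * (real T * \<delta>)^2 / (\<Sum>i<T. (1 - 0)^2))"
    by (rule Hoeffding_ineq_le) (use \<delta> T in auto)
  also have "\<dots> = exp (-2 * real T * \<delta>^2)"
    using T by (simp add: power2_eq_square)
  finally show ?thesis unfolding P_def .
qed

lemma exists_samples_uniformly_good:
  fixes \<mu> :: "'r pmf" and F :: "'s \<Rightarrow> 'r \<Rightarrow> real"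
  assumes "finite S" and "T > 0" and "\<delta> > 0"
    and "\<And>s r. s \<in> S \<Longrightarrow> 0 \<le> F s r \<and> F s r \<le> 1"
    and "\<And>s. s \<in> S \<Longrightarrow> measure_pmf.expectation \<mu> (F s) \<ge> 1 - \<epsilon>"
    and "real (card S) * exp (-2 * real T * \<delta>^2) < 1"
  shows "\<exists>rs. \<forall>s\<in>S. (\<Sum>i<T. F s (rs i)) / real T \<ge> 1 - \<epsilon> - \<delta>"
proof -
  define P where "P = Pi_pmf {..<T} undefined (\<lambda>_. \<mu>)"
  define bad where "bad s = {\<omega>. (\<Sum>i<T. F s (\<omega> i)) < real T * (1 - \<epsilon> - \<delta>)}" for s
  have "measure_pmf.prob P (\<Union>s\<in>S. bad s) \<le> (\<Sum>s\<in>S. measure_pmf.prob P (bad s))"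
    by (rule measure_pmf.finite_measure_subadditive_finite) (use assms in auto)
  also have "\<dots> \<le> (\<Sum>s\<in>S. exp (-2 * real T * \<delta>^2))"
    unfolding P_def bad_def using assms by (intro sum_mono prob_sample_sum_low_le) auto
  also have "\<dots> < 1" using assms by simp
  finally have "(\<Union>s\<in>S. bad s) \<noteq> UNIV" by auto
  then obtain \<omega> where "\<omega> \<notin> (\<Union>s\<in>S. bad s)" by auto
  then have "\<forall>s\<in>S. (\<Sum>i<T. F s (\<omega> i)) / real T \<ge> 1 - \<epsilon> - \<delta>"
    using assms by (auto simp: bad_def field_simps)
  then show ?thesis by blast
qed

lemma expectation_pmf_cong:
  fixes f g :: "'a \<Rightarrow> real"
  assumes "\<And>m. m \<in> set_pmf p \<Longrightarrow> f m = g m"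
  shows "measure_pmf.expectation p f = measure_pmf.expectation p g"
  using assms by (intro integral_cong_AE) (auto simp: AE_measure_pmf_iff)

section \<open>From public to private randomness\<close>

definition seed_success ::
  "nat \<Rightarrow> (nat \<Rightarrow> nat \<Rightarrow> nat pmf) \<Rightarrow> (nat \<Rightarrow> complex mat) \<Rightarrow> (nat \<Rightarrow> nat \<Rightarrow> 'z \<Rightarrow> complex mat) \<Rightarrow>
   (nat \<times> nat \<times> 'z) set \<Rightarrow> nat \<Rightarrow> nat \<Rightarrow> nat \<Rightarrow> real" where
  "seed_success q A \<rho> E R x y r =
     measure_pmf.expectation (A r x) (\<lambda>m. succ_prob (2^q) (E r m) (\<rho> y) (\<lambda>z. (x,y,z) \<in> R))"

lemma seed_success_bounds:
  assumes "hybrid_pub_protocol X Y R \<epsilon> a q \<mu> A \<rho> E" and "x \<in> X" and "y \<in> Y"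
  shows "0 \<le> seed_success q A \<rho> E R x y r \<and> seed_success q A \<rho> E R x y r \<le> 1"
proof -
  have supp: "set_pmf (A r x) \<subseteq> {..<2^a}" and povm: "\<And>m. m < 2^a \<Longrightarrow> povm (2^q) (E r m)"
    and dens: "density (2^q) (\<rho> y)"
    using assms unfolding hybrid_pub_protocol_def by auto
  note bounds = succ_prob_nonneg[OF povm dens] succ_prob_le_1[OF povm dens]
  have "0 \<le> succ_prob (2^q) (E r m) (\<rho> y) (\<lambda>z. (x,y,z) \<in> R)
        \<and> succ_prob (2^q) (E r m) (\<rho> y) (\<lambda>z. (x,y,z) \<in> R) \<le> 1" if "m \<in> set_pmf (A r x)" for m
    using that supp bounds by blast
  moreover have "integrable (measure_pmf (A r x)) (\<lambda>m. succ_prob (2^q) (E r m) (\<rho> y) (\<lambda>z. (x,y,z) \<in> R))"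
    using supp by (intro integrable_measure_pmf_finite) (auto dest: finite_subset)
  ultimately show ?thesis
    unfolding seed_success_def
    by (auto intro!: measure_pmf.integral_ge_const measure_pmf.integral_le_const
        simp: AE_measure_pmf_iff)
qed

lemma pair_code_less:
  fixes i m :: nat
  assumes "i < 2^k" and "m < 2^a"
  shows "i * 2^a + m < 2^(a + k)"
proof -
  have "i * 2^a + m < (i + 1) * 2^a" using assms by simp
  also have "\<dots> \<le> 2^k * 2^a" using assms by (intro mult_right_mono) auto
  finally show ?thesis by (simp add: power_add mult.commute)
qed

lemma expectation_seed_mixture:
  fixes p :: "nat \<Rightarrow> nat pmf" and g :: "nat \<Rightarrow> nat \<Rightarrow> real"
  assumes supp: "\<And>i. set_pmf (p i) \<subseteq> {..<2^a}"
  shows "measure_pmf.expectation (pmf_of_set {..<2^k} \<bind> (\<lambda>i. map_pmf (\<lambda>m. i * 2^a + m) (p i)))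
           (\<lambda>M. g (M div 2^a) (M mod 2^a))
         = (\<Sum>i<2^k. measure_pmf.expectation (p i) (g i)) / 2^k"
proof -
  have "measure_pmf.expectation (map_pmf (\<lambda>m. i * 2^a + m) (p i)) (\<lambda>M. g (M div 2^a) (M mod 2^a))
          = measure_pmf.expectation (p i) (g i)" for i
    unfolding integral_map_pmf
  proof (intro expectation_pmf_cong)
    fix m assume "m \<in> set_pmf (p i)"
    then have "m < 2^a" using supp by blast
    then show "g ((i * 2^a + m) div 2^a) ((i * 2^a + m) mod 2^a) = g i m" by simp
  qed
  moreover have "finite (set_pmf (map_pmf (\<lambda>m. i * 2^a + m) (p i)))" for i
    using supp by (auto intro: finite_subset)
  moreover have "{..<2^k :: nat} \<noteq> {}" by (simp add: lessThan_empty_iff)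
  ultimately show ?thesis
    by (simp add: pmf_expectation_bind_pmf_of_set sum_distrib_left[symmetric] divide_inverse_commute)
qed

lemma hybrid_priv_protocol_of_seeds:
  fixes rs :: "nat \<Rightarrow> nat"
  assumes prot: "hybrid_pub_protocol X Y R \<epsilon> a q \<mu> A \<rho> E"
    and good: "\<And>x y. x \<in> X \<Longrightarrow> y \<in> Y \<Longrightarrow>
                 (\<Sum>i<2^k. seed_success q A \<rho> E R x y (rs i)) / 2^k \<ge> 1 - \<epsilon> - \<delta>"
  shows "hybrid_priv_protocol X Y R (\<epsilon> + \<delta>) (a + k) q
           (\<lambda>x. pmf_of_set {..<2^k} \<bind> (\<lambda>i. map_pmf (\<lambda>m. i * 2^a + m) (A (rs i) x))) \<rho>
           (\<lambda>M. E (rs (M div 2^a)) (M mod 2^a))"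
proof -
  have supp: "\<And>r x. x \<in> X \<Longrightarrow> set_pmf (A r x) \<subseteq> {..<2^a}"
    and dens: "\<And>y. y \<in> Y \<Longrightarrow> density (2^q) (\<rho> y)"
    and povm: "\<And>r m. m < 2^a \<Longrightarrow> povm (2^q) (E r m)"
    using prot unfolding hybrid_pub_protocol_def by auto
  show ?thesis
    unfolding hybrid_priv_protocol_def
  proof (intro conjI ballI allI impI)
    fix x assume x: "x \<in> X"
    have "i * 2^a + m < 2^(a + k)" if "i < 2^k" and "m \<in> set_pmf (A (rs i) x)" for i m
      using that supp[OF x] by (intro pair_code_less) auto
    then show "set_pmf (pmf_of_set {..<2^k} \<bind> (\<lambda>i. map_pmf (\<lambda>m. i * 2^a + m) (A (rs i) x)))
                 \<subseteq> {..<2^(a + k)}"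
      by (auto simp: set_bind_pmf lessThan_empty_iff)
  next
    fix x y assume x: "x \<in> X" and y: "y \<in> Y"
    show "1 - (\<epsilon> + \<delta>) \<le> measure_pmf.expectation
            (pmf_of_set {..<2^k} \<bind> (\<lambda>i. map_pmf (\<lambda>m. i * 2^a + m) (A (rs i) x)))
            (\<lambda>M. succ_prob (2^q) (E (rs (M div 2^a)) (M mod 2^a)) (\<rho> y) (\<lambda>z. (x, y, z) \<in> R))"
      using good[OF x y] supp[OF x]
      by (subst expectation_seed_mixture[where g = "\<lambda>i m. succ_prob (2^q) (E (rs i) m) (\<rho> y) (\<lambda>z. (x, y, z) \<in> R)"])
        (simp_all add: seed_success_def)
  qed (use dens povm in auto)
qed

lemma exists_hybrid_priv_protocol:
  fixes \<delta> :: real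
  assumes "finite X" and "finite Y" and "\<delta> > 0"
    and prot: "hybrid_pub_protocol X Y R \<epsilon> a q \<mu> A \<rho> E"
    and few_inputs: "real (card X * card Y) * exp (-2 * 2^k * \<delta>^2) < 1"
  shows "\<exists>A' E'. hybrid_priv_protocol X Y R (\<epsilon> + \<delta>) (a + k) q A' \<rho> E'"
proof -
  define F where "F = (\<lambda>(x, y). seed_success q A \<rho> E R x y)"
  have "\<exists>rs. \<forall>s\<in>X \<times> Y. (\<Sum>i<(2::nat)^k. F s (rs i)) / real (2^k) \<ge> 1 - \<epsilon> - \<delta>"
  proof (rule exists_samples_uniformly_good)
    show "0 \<le> F s r \<and> F s r \<le> 1" if "s \<in> X \<times> Y" for s r
      using that seed_success_bounds[OF prot] by (auto simp: F_def)
    show "measure_pmf.expectation \<mu> (F s) \<ge> 1 - \<epsilon>" if "s \<in> X \<times> Y" for s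
      using that prot by (auto simp: F_def hybrid_pub_protocol_def seed_success_def[abs_def])
  qed (use assms in \<open>simp_all add: card_cartesian_product\<close>)
  then obtain rs where "\<forall>s\<in>X \<times> Y. (\<Sum>i<(2::nat)^k. F s (rs i)) / real (2^k) \<ge> 1 - \<epsilon> - \<delta>" ..
  then show ?thesis
    using hybrid_priv_protocol_of_seeds[where k=k and rs=rs and \<delta>=\<delta>, OF prot] by (auto simp: F_def)
qed

lemma RQ_priv_le:
  assumes "hybrid_priv_protocol X Y R \<gamma> a q A \<rho> E"
  shows "RQ_priv X Y R \<gamma> \<le> enat (a + q)"
  unfolding RQ_priv_def using assms by (intro Inf_lower) blast

lemma RQ_pub_attained:
  assumes "RQ_pub X Y R \<gamma> \<noteq> \<infinity>"
  obtains a q \<mu> A \<rho> E where "hybrid_pub_protocol X Y R \<gamma> a q \<mu> A \<rho> E"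
    and "RQ_pub X Y R \<gamma> = enat (a + q)"
proof -
  let ?S = "{enat (a + q) | a q. \<exists>\<mu> A \<rho> E. hybrid_pub_protocol X Y R \<gamma> a q \<mu> A \<rho> E}"
  have "?S \<noteq> {}" using assms unfolding RQ_pub_def by (metis Inf_empty top_enat_def)
  then have "RQ_pub X Y R \<gamma> \<in> ?S" unfolding RQ_pub_def by (meson ex_in_conv wellorder_InfI)
  then show ?thesis using that by blast
qed

lemma RQ_priv_le_RQ_pub_add:
  fixes \<delta> :: real
  assumes "finite X" and "finite Y" and "\<delta> > 0"
    and few_inputs: "real (card X * card Y) * exp (-2 * 2^k * \<delta>^2) < 1"
  shows "RQ_priv X Y R (\<epsilon> + \<delta>) \<le> RQ_pub X Y R \<epsilon> + enat k"
proof (cases "RQ_pub X Y R \<epsilon> = \<infinity>")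
  case False
  then obtain a q \<mu> A \<rho> E where pub: "hybrid_pub_protocol X Y R \<epsilon> a q \<mu> A \<rho> E"
    and cost: "RQ_pub X Y R \<epsilon> = enat (a + q)" by (rule RQ_pub_attained)
  obtain A' E' where "hybrid_priv_protocol X Y R (\<epsilon> + \<delta>) (a + k) q A' \<rho> E'"
    using exists_hybrid_priv_protocol[OF assms(1-3) pub few_inputs] by blast
  then have "RQ_priv X Y R (\<epsilon> + \<delta>) \<le> enat (a + k + q)" by (rule RQ_priv_le)
  then show ?thesis using cost by (simp add: add.commute add.left_commute)
qed simp

section \<open>Number of seeds\<close>

lemma ln_le_log2:
  assumes "x \<ge> 1" shows "ln x \<le> log 2 x"
proof -
  have "ln x * ln 2 \<le> ln x" using assms ln_2_less_1 by (simp add: mult_left_le)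
  then show ?thesis by (simp add: log_def le_divide_eq)
qed

lemma nat_mult_exp_less_1:
  fixes m n :: nat
  assumes "log 2 m + log 2 n < 2 * t"
  shows "real (m * n) * exp (-2 * t) < 1"
proof (cases "m = 0 \<or> n = 0")
  case False
  then have "ln m + ln n - 2 * t < 0"
    using assms ln_le_log2[of m] ln_le_log2[of n] by simp
  moreover have "real (m * n) * exp (-2 * t) = exp (ln m + ln n - 2 * t)"
    using False by (simp add: exp_add exp_diff exp_minus field_simps)
  ultimately show ?thesis by simp
qed auto

lemma two_power_ceiling_log_bound:
  assumes "L \<ge> 1" and "\<delta> > 0"
  shows "L \<le> 2 ^ nat \<lceil>log 2 L + 2 * max 0 (log 2 (1 / \<delta>))\<rceil> * \<delta>^2"
proof -
  define D where "D = max 0 (log 2 (1 / \<delta>))"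
  have "1 / \<delta> = 2 powr (log 2 (1 / \<delta>))" using assms(2) by simp
  also have "\<dots> \<le> 2 powr D" by (simp add: D_def)
  finally have "1 / \<delta> \<le> 2 powr D" .
  then have "1 \<le> (2 powr D * \<delta>)^2"
    using assms(2) by (simp add: divide_le_eq one_le_power)
  then have "L \<le> L * (2 powr D)^2 * \<delta>^2"
    using assms(1) by (simp add: power_mult_distrib mult.assoc mult_le_cancel_left1)
  also have "L * (2 powr D)^2 = 2 powr (log 2 L + 2 * D)"
    using assms(1) by (simp add: powr_add) (metis mult_2 powr_add power2_eq_square)
  also have "\<dots> \<le> 2 ^ nat \<lceil>log 2 L + 2 * D\<rceil>"
    using assms(1) by (simp add: D_def powr_realpow[symmetric] del: powr_realpow)
  finally show ?thesis using assms(2) unfolding D_def by (simp add: mult_right_mono)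
qed

lemma seed_bits_suffice:
  fixes m n :: nat and \<delta> :: real
  assumes "\<delta> > 0"
  defines "L \<equiv> 2 + log 2 (real m) + log 2 (real n)" and "D \<equiv> max 0 (log 2 (1 / \<delta>))"
  defines "k \<equiv> nat \<lceil>log 2 L + 2 * D\<rceil>"
  shows "real (m * n) * exp (-2 * 2^k * \<delta>^2) < 1" and "k \<le> nat \<lceil>2 * (log 2 L + D)\<rceil>"
proof -
  have "0 \<le> log 2 (real j)" for j :: nat by (cases "j = 0") (auto simp: log_def)
  then have L: "L \<ge> 2" by (simp add: L_def)
  then show "k \<le> nat \<lceil>2 * (log 2 L + D)\<rceil>" unfolding k_def by (intro nat_mono ceiling_mono) simp
  have "L \<le> 2^k * \<delta>^2"
    unfolding k_def D_def by (rule two_power_ceiling_log_bound) (use L assms(1) in auto)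
  then have "real (m * n) * exp (-2 * (2^k * \<delta>^2)) < 1"
    using L by (intro nat_mult_exp_less_1) (simp add: L_def)
  then show "real (m * n) * exp (-2 * 2^k * \<delta>^2) < 1" by (simp add: mult.assoc)
qed

theorem lemma3p1:
  "\<exists>C::real. \<forall>(X::nat set) (Y::nat set) (R::(nat \<times> nat \<times> 'z) set) (\<epsilon>::real) (\<delta>::real).
     finite X \<longrightarrow> finite Y \<longrightarrow> R \<subseteq> X \<times> Y \<times> UNIV \<longrightarrow> \<epsilon> > 0 \<longrightarrow> \<delta> > 0 \<longrightarrow>
     RQ_priv X Y R (\<epsilon> + \<delta>) \<le> RQ_pub X Y R \<epsilon> +
       enat (nat \<lceil>C * (log 2 (2 + log 2 (real (card X)) + log 2 (real (card Y)))
                       + max 0 (log 2 (1 / \<delta>)))\<rceil>)"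
proof (intro exI[of _ 2] allI impI)
  fix X Y :: "nat set" and R :: "(nat \<times> nat \<times> 'z) set" and \<epsilon> \<delta> :: real
  assume "finite X" "finite Y" "R \<subseteq> X \<times> Y \<times> UNIV" "\<epsilon> > 0" "\<delta> > 0"
  define L where "L = 2 + log 2 (real (card X)) + log 2 (real (card Y))"
  define D where "D = max 0 (log 2 (1 / \<delta>))"
  define k where "k = nat \<lceil>log 2 L + 2 * D\<rceil>"
  have "RQ_priv X Y R (\<epsilon> + \<delta>) \<le> RQ_pub X Y R \<epsilon> + enat k"
    using \<open>finite X\<close> \<open>finite Y\<close> \<open>\<delta> > 0\<close> seed_bits_suffice(1)[OF \<open>\<delta> > 0\<close>]
    unfolding k_def L_def D_def by (intro RQ_priv_le_RQ_pub_add)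
  also have "\<dots> \<le> RQ_pub X Y R \<epsilon> + enat (nat \<lceil>2 * (log 2 L + D)\<rceil>)"
    using seed_bits_suffice(2)[OF \<open>\<delta> > 0\<close>] unfolding k_def L_def D_def by (intro add_left_mono) simp
  finally show "RQ_priv X Y R (\<epsilon> + \<delta>) \<le> RQ_pub X Y R \<epsilon> +
       enat (nat \<lceil>2 * (log 2 (2 + log 2 (real (card X)) + log 2 (real (card Y)))
                       + max 0 (log 2 (1 / \<delta>)))\<rceil>)"
    unfolding L_def D_def .
qed

end
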